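(* Let $X$ be a zero-dimensional Lindel\"of space. Then $X$ has the star-Hurewicz property if and only if $X$ has the Hurewicz property.
   Context: A space is zero-dimensional if it has a base of clopen sets. $St(A,\mathcal{P})=\bigcup\{P\in\mathcal{P}: P\cap A\ne\emptyset\}$. $X$ has the Hurewicz property if for each sequence $\langle\mathcal{U}_n\rangle$ of open covers there are finite $\mathcal{V}_n\subseteq\mathcal{U}_n$ such that each $x\in X$ belongs to $\bigcup\mathcal{V}_n$ for all but finitely many $n$. $X$ has the star-Hurewicz property if for each sequence $\langle\mathcal{U}_n\rangle$ of open covers there are finite $\mathcal{V}_n\subseteq\mathcal{U}_n$ such that each $x\in X$ belongs to $St(\bigcup\mathcal{V}_n,\mathcal{U}_n)$ for all but finitely many $n$. *)

theory Defs
  imports "HOL-Analysis.Analysis"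
begin

definition zero_dimensional :: "'a topology \<Rightarrow> bool" where
  "zero_dimensional X \<longleftrightarrow>
     (\<exists>\<B>. (\<forall>B\<in>\<B>. openin X B \<and> closedin X B) \<and>
          (\<forall>U. openin X U \<longrightarrow> (\<exists>\<W>. \<W> \<subseteq> \<B> \<and> \<Union>\<W> = U)))"

definition open_cover :: "'a topology \<Rightarrow> 'a set set \<Rightarrow> bool" where
  "open_cover X \<U> \<longleftrightarrow> (\<forall>U\<in>\<U>. openin X U) \<and> \<Union>\<U> = topspace X"

definition star :: "'a set \<Rightarrow> 'a set set \<Rightarrow> 'a set" where
  "star A \<P> = \<Union>{P\<in>\<P>. P \<inter> A \<noteq> {}}"

definition Hurewicz :: "'a topology \<Rightarrow> bool" where
  "Hurewicz X \<longleftrightarrow>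
     (\<forall>\<U>::nat \<Rightarrow> 'a set set. (\<forall>n. open_cover X (\<U> n)) \<longrightarrow>
        (\<exists>\<V>::nat \<Rightarrow> 'a set set. (\<forall>n. finite (\<V> n) \<and> \<V> n \<subseteq> \<U> n) \<and>
           (\<forall>x\<in>topspace X. \<forall>\<^sub>F n in sequentially. x \<in> \<Union>(\<V> n))))"

definition star_Hurewicz :: "'a topology \<Rightarrow> bool" where
  "star_Hurewicz X \<longleftrightarrow>
     (\<forall>\<U>::nat \<Rightarrow> 'a set set. (\<forall>n. open_cover X (\<U> n)) \<longrightarrow>
        (\<exists>\<V>::nat \<Rightarrow> 'a set set. (\<forall>n. finite (\<V> n) \<and> \<V> n \<subseteq> \<U> n) \<and>
           (\<forall>x\<in>topspace X. \<forall>\<^sub>F n in sequentially. x \<in> star (\<Union>(\<V> n)) (\<U> n))))"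

end

theory Submission
  imports Defs
begin

text \<open>
  Stars only differ from unions when the cover members overlap: if \<open>\<U>\<close> is a pairwise disjoint
  open cover and \<open>\<V> \<subseteq> \<U>\<close>, then \<open>star (\<Union>\<V>) \<U> = \<Union>\<V>\<close>, so for such covers the two selection
  principles coincide. In a zero-dimensional Lindelof space every open cover has a countable
  clopen refinement \<open>C\<^sub>0, C\<^sub>1, \<dots>\<close>, and the sets \<open>C\<^sub>n - (C\<^sub>0 \<union> \<dots> \<union> C\<^sub>n\<^sub>-\<^sub>1)\<close> form a pairwise
  disjoint open refinement. Applying star-Hurewicz to these refinements and enlarging each selected
  set to a member of the original cover containing it yields the Hurewicz selection.
\<close>

lemma open_coverI:
  "(\<And>U. U \<in> \<U> \<Longrightarrow> openin X U) \<Longrightarrow> \<Union>\<U> = topspace X \<Longrightarrow> open_cover X \<U>"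
  by (simp add: open_cover_def)

lemma open_coverD:
  assumes "open_cover X \<U>"
  shows open_cover_openin: "U \<in> \<U> \<Longrightarrow> openin X U" and Union_open_cover: "\<Union>\<U> = topspace X"
  using assms by (simp_all add: open_cover_def)

lemma Union_subset_star: "\<V> \<subseteq> \<P> \<Longrightarrow> \<Union>\<V> \<subseteq> star (\<Union>\<V>) \<P>"
  unfolding star_def by blast

lemma star_Union_disjoint_subfamily:
  assumes "disjoint \<P>" and "\<V> \<subseteq> \<P>"
  shows "star (\<Union>\<V>) \<P> = \<Union>\<V>"
proof
  show "star (\<Union>\<V>) \<P> \<subseteq> \<Union>\<V>"
  proof
    fix x assume "x \<in> star (\<Union>\<V>) \<P>"
    then obtain P Q where "P \<in> \<P>" "x \<in> P" "Q \<in> \<V>" "P \<inter> Q \<noteq> {}"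
      unfolding star_def by blast
    with assms have "P = Q" by (meson disjnt_def pairwiseD subsetD)
    with \<open>x \<in> P\<close> \<open>Q \<in> \<V>\<close> show "x \<in> \<Union>\<V>" by blast
  qed
qed (rule Union_subset_star[OF assms(2)])

lemma Hurewicz_imp_star_Hurewicz:
  assumes "Hurewicz X"
  shows "star_Hurewicz X"
  unfolding star_Hurewicz_def
proof (intro allI impI)
  fix \<U> :: "nat \<Rightarrow> 'a set set" assume "\<forall>n. open_cover X (\<U> n)"
  with assms have "\<exists>\<V>. (\<forall>n. finite (\<V> n) \<and> \<V> n \<subseteq> \<U> n) \<and>
      (\<forall>x\<in>topspace X. \<forall>\<^sub>F n in sequentially. x \<in> \<Union>(\<V> n))"
    unfolding Hurewicz_def by simp
  then obtain \<V> where \<V>: "\<forall>n. finite (\<V> n) \<and> \<V> n \<subseteq> \<U> n"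
    and ev: "\<forall>x\<in>topspace X. \<forall>\<^sub>F n in sequentially. x \<in> \<Union>(\<V> n)"
    by (elim exE conjE)
  have "\<forall>\<^sub>F n in sequentially. x \<in> star (\<Union>(\<V> n)) (\<U> n)" if "x \<in> topspace X" for x
  proof (rule eventually_mono)
    show "\<forall>\<^sub>F n in sequentially. x \<in> \<Union>(\<V> n)"
      using ev that by blast
  qed (use \<V> Union_subset_star in blast)
  with \<V> show "\<exists>\<V>. (\<forall>n. finite (\<V> n) \<and> \<V> n \<subseteq> \<U> n) \<and>
      (\<forall>x\<in>topspace X. \<forall>\<^sub>F n in sequentially. x \<in> star (\<Union>(\<V> n)) (\<U> n))"
    by blast
qed

text \<open>Ellis' notion, here without the customary Hausdorff assumption.\<close>
definition ultraparacompact :: "'a topology \<Rightarrow> bool" where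
  "ultraparacompact X \<longleftrightarrow>
     (\<forall>\<U>. open_cover X \<U> \<longrightarrow>
        (\<exists>\<W>. open_cover X \<W> \<and> disjoint \<W> \<and> (\<forall>W\<in>\<W>. \<exists>U\<in>\<U>. W \<subseteq> U)))"

lemma ultraparacompact_star_Hurewicz_imp_Hurewicz:
  assumes "ultraparacompact X" and "star_Hurewicz X"
  shows "Hurewicz X"
  unfolding Hurewicz_def
proof (intro allI impI)
  fix \<U> :: "nat \<Rightarrow> 'a set set" assume "\<forall>n. open_cover X (\<U> n)"
  with assms(1) have "\<forall>n. \<exists>\<W>. open_cover X \<W> \<and> disjoint \<W> \<and> (\<forall>W\<in>\<W>. \<exists>U\<in>\<U> n. W \<subseteq> U)"
    unfolding ultraparacompact_def by simp
  then obtain \<W> where \<W>: "\<forall>n. open_cover X (\<W> n) \<and> disjoint (\<W> n) \<and> (\<forall>W\<in>\<W> n. \<exists>U\<in>\<U> n. W \<subseteq> U)"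
    by (rule choice[THEN exE])
  then have "\<exists>\<V>. (\<forall>n. finite (\<V> n) \<and> \<V> n \<subseteq> \<W> n) \<and>
      (\<forall>x\<in>topspace X. \<forall>\<^sub>F n in sequentially. x \<in> star (\<Union>(\<V> n)) (\<W> n))"
    using assms(2) unfolding star_Hurewicz_def by simp
  then obtain \<V> where \<V>: "\<forall>n. finite (\<V> n) \<and> \<V> n \<subseteq> \<W> n"
    and ev: "\<forall>x\<in>topspace X. \<forall>\<^sub>F n in sequentially. x \<in> star (\<Union>(\<V> n)) (\<W> n)"
    by (elim exE conjE)
  define f where "f n V = (SOME U. U \<in> \<U> n \<and> V \<subseteq> U)" for n V
  have f: "f n V \<in> \<U> n \<and> V \<subseteq> f n V" if "V \<in> \<V> n" for n V
  proof -
    have "\<exists>U. U \<in> \<U> n \<and> V \<subseteq> U"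
      using \<W> \<V> that by blast
    then show ?thesis
      unfolding f_def by (rule someI_ex)
  qed
  have "\<forall>\<^sub>F n in sequentially. x \<in> \<Union>(f n ` \<V> n)" if "x \<in> topspace X" for x
  proof (rule eventually_mono)
    show "\<forall>\<^sub>F n in sequentially. x \<in> star (\<Union>(\<V> n)) (\<W> n)"
      using ev that by blast
  next
    fix n assume "x \<in> star (\<Union>(\<V> n)) (\<W> n)"
    moreover have "star (\<Union>(\<V> n)) (\<W> n) = \<Union>(\<V> n)"
      using \<W> \<V> by (intro star_Union_disjoint_subfamily) auto
    ultimately show "x \<in> \<Union>(f n ` \<V> n)"
      using f by blast
  qed
  then show "\<exists>\<V>. (\<forall>n. finite (\<V> n) \<and> \<V> n \<subseteq> \<U> n) \<and>
      (\<forall>x\<in>topspace X. \<forall>\<^sub>F n in sequentially. x \<in> \<Union>(\<V> n))"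
    using \<V> f by (intro exI[of _ "\<lambda>n. f n ` \<V> n"]) blast
qed

lemma zero_dimensional_clopen_nbhd:
  assumes "zero_dimensional X" and "openin X U" and "x \<in> U"
  obtains C where "openin X C" and "closedin X C" and "x \<in> C" and "C \<subseteq> U"
proof -
  obtain \<B> where clopen: "\<forall>B\<in>\<B>. openin X B \<and> closedin X B"
    and base: "\<forall>U. openin X U \<longrightarrow> (\<exists>\<W>. \<W> \<subseteq> \<B> \<and> \<Union>\<W> = U)"
    using assms(1) unfolding zero_dimensional_def by (elim exE conjE)
  obtain \<W> where "\<W> \<subseteq> \<B>" "\<Union>\<W> = U"
    using base assms(2) by (elim allE impE exE conjE)
  then obtain C where "C \<in> \<B>" "x \<in> C" "C \<subseteq> U"
    using \<open>x \<in> U\<close> by blast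
  with clopen that show ?thesis by blast
qed

lemma zero_dimensional_clopen_refinement:
  assumes "zero_dimensional X" and "open_cover X \<U>"
  shows "open_cover X {C. openin X C \<and> closedin X C \<and> (\<exists>U\<in>\<U>. C \<subseteq> U)}"
proof (rule open_coverI)
  let ?\<C> = "{C. openin X C \<and> closedin X C \<and> (\<exists>U\<in>\<U>. C \<subseteq> U)}"
  have "x \<in> \<Union>?\<C>" if "x \<in> topspace X" for x
  proof -
    have "x \<in> \<Union>\<U>"
      using that by (simp add: Union_open_cover[OF assms(2)])
    then obtain U where "U \<in> \<U>" "x \<in> U" by blast
    with assms obtain C where "openin X C" "closedin X C" "x \<in> C" "C \<subseteq> U"
      by (meson open_cover_openin zero_dimensional_clopen_nbhd)
    with \<open>U \<in> \<U>\<close> show ?thesis by blast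
  qed
  moreover have "\<Union>?\<C> \<subseteq> topspace X"
    by (auto dest: openin_subset)
  ultimately show "\<Union>?\<C> = topspace X" by blast
qed auto

lemma Lindelof_space_countable_subcover:
  assumes "Lindelof_space X" and "open_cover X \<U>"
  obtains \<V> where "countable \<V>" and "\<V> \<subseteq> \<U>" and "open_cover X \<V>"
proof -
  have "\<exists>\<V>. countable \<V> \<and> \<V> \<subseteq> \<U> \<and> \<Union>\<V> = topspace X"
    using assms(1) open_cover_openin[OF assms(2)] Union_open_cover[OF assms(2)]
    by (rule Lindelof_spaceD)
  then obtain \<V> where "countable \<V>" "\<V> \<subseteq> \<U>" "\<Union>\<V> = topspace X"
    by (elim exE conjE)
  moreover have "open_cover X \<V>"
    using open_cover_openin[OF assms(2)] \<open>\<V> \<subseteq> \<U>\<close> \<open>\<Union>\<V> = topspace X\<close>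
    by (intro open_coverI) auto
  ultimately show ?thesis using that by simp
qed

lemma openin_disjointed:
  assumes "\<And>n. openin X (C n) \<and> closedin X (C n)"
  shows "openin X (disjointed C n)"
  unfolding disjointed_def using assms by (intro openin_diff closedin_Union) auto

lemma countable_clopen_cover_disjoint_refinement:
  assumes "open_cover X \<C>" and "countable \<C>" and "\<And>C. C \<in> \<C> \<Longrightarrow> closedin X C"
  shows "\<exists>\<W>. open_cover X \<W> \<and> disjoint \<W> \<and> (\<forall>W\<in>\<W>. \<exists>C\<in>\<C>. W \<subseteq> C)"
proof (cases "\<C> = {}")
  case True
  then show ?thesis using assms(1) by auto
next
  case False
  define C where "C = from_nat_into \<C>"
  have range_C: "range C = \<C>"
    unfolding C_def using range_from_nat_into[OF False assms(2)] .
  have clopen: "openin X (C n) \<and> closedin X (C n)" for n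
    using open_cover_openin[OF assms(1)] assms(3) range_C by blast
  have "open_cover X (range (disjointed C))"
    using openin_disjointed[of X C, OF clopen] Union_open_cover[OF assms(1)]
    by (intro open_coverI) (auto simp: UN_disjointed_eq range_C)
  moreover have "disjoint (range (disjointed C))"
    by (rule disjoint_family_on_disjoint_image[OF disjoint_family_disjointed])
  moreover have "\<forall>W\<in>range (disjointed C). \<exists>C'\<in>\<C>. W \<subseteq> C'"
    using disjointed_subset range_C by fastforce
  ultimately show ?thesis by blast
qed

lemma zero_dimensional_Lindelof_imp_ultraparacompact:
  assumes "zero_dimensional X" and "Lindelof_space X"
  shows "ultraparacompact X"
  unfolding ultraparacompact_def
proof (intro allI impI)
  fix \<U> assume "open_cover X \<U>"
  let ?\<C> = "{C. openin X C \<and> closedin X C \<and> (\<exists>U\<in>\<U>. C \<subseteq> U)}"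
  obtain \<D> where \<D>: "countable \<D>" "\<D> \<subseteq> ?\<C>" "open_cover X \<D>"
    using assms(2) zero_dimensional_clopen_refinement[OF assms(1) \<open>open_cover X \<U>\<close>]
    by (rule Lindelof_space_countable_subcover)
  have "\<And>D. D \<in> \<D> \<Longrightarrow> closedin X D"
    using \<D>(2) by blast
  with \<D>(3,1) have "\<exists>\<W>. open_cover X \<W> \<and> disjoint \<W> \<and> (\<forall>W\<in>\<W>. \<exists>D\<in>\<D>. W \<subseteq> D)"
    by (rule countable_clopen_cover_disjoint_refinement)
  then obtain \<W> where "open_cover X \<W>" "disjoint \<W>" and refines_\<D>: "\<forall>W\<in>\<W>. \<exists>D\<in>\<D>. W \<subseteq> D"
    by (elim exE conjE)
  moreover have "\<forall>W\<in>\<W>. \<exists>U\<in>\<U>. W \<subseteq> U"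
  proof
    fix W assume "W \<in> \<W>"
    then obtain D where "D \<in> \<D>" "W \<subseteq> D"
      using refines_\<D> by blast
    moreover obtain U where "U \<in> \<U>" "D \<subseteq> U"
      using \<D>(2) \<open>D \<in> \<D>\<close> by blast
    ultimately show "\<exists>U\<in>\<U>. W \<subseteq> U"
      by (meson order_trans)
  qed
  ultimately show "\<exists>\<W>. open_cover X \<W> \<and> disjoint \<W> \<and> (\<forall>W\<in>\<W>. \<exists>U\<in>\<U>. W \<subseteq> U)"
    by blast
qed

theorem mainTheorem15:
  fixes X :: "'a topology"
  assumes "zero_dimensional X" and "Lindelof_space X"
  shows "star_Hurewicz X \<longleftrightarrow> Hurewicz X"
  using Hurewicz_imp_star_Hurewicz
    ultraparacompact_star_Hurewicz_imp_Hurewicz[OF zero_dimensional_Lindelof_imp_ultraparacompact[OF assms]]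
  by blast

end
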